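(* Let $x_1,\dots,x_n\in\mathbb{R}^p$, let $T\subset\{1,\dots,p\}$ with $|T|=s\geqslant1$, fix $c>1$ and let $\bar c=(c+1)/(c-1)$. Then for any integer $m>0$, $$\kappa_{\bar c}\geqslant\kappa(m)\Big(1-\mu(m)\,\bar c\sqrt{\frac sm}\Big).$$
   Context: $\|\delta\|_{2,n}=\sqrt{n^{-1}\sum_{i=1}^n(x_i'\delta)^2}$; for $A\subset\{1,\dots,p\}$, $\delta_A$ is $\delta$ with entries outside $A$ set to zero, and $T^c$ is the complement of $T$. Restricted eigenvalue: $\kappa_{\bar c}=\min\{\sqrt s\|\delta\|_{2,n}/\|\delta_T\|_1:\ \|\delta_{T^c}\|_1\leqslant\bar c\|\delta_T\|_1,\ \delta_T\neq0\}$. Sparse eigenvalues: $\kappa(m)^2=\min$ and $\phi(m)=\max$ of $\|\delta\|_{2,n}^2/\|\delta\|^2$ over $\delta\neq0$ with $\|\delta_{T^c}\|_0\leqslant m$ (number of nonzero entries outside $T$ at most $m$), and $\mu(m)=\sqrt{\phi(m)}/\kappa(m)$, so that $\kappa(m)\mu(m)=\sqrt{\phi(m)}$. *)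

theory Defs
  imports "HOL-Analysis.Analysis"
begin

text \<open>Design vectors x_1..x_n in R^p are represented as x :: nat => real^'p,
 with observations indexed 0..n-1; 'p is a finite index type playing the role of {1..p}.\<close>

definition norm2n :: "(nat \<Rightarrow> real^'p) \<Rightarrow> nat \<Rightarrow> real^'p \<Rightarrow> real" where
  "norm2n x n \<delta> = sqrt ((\<Sum>i<n. (x i \<bullet> \<delta>)^2) / real n)"

definition restr :: "real^'p \<Rightarrow> 'p set \<Rightarrow> real^'p" where
  "restr \<delta> A = (\<chi> j. if j \<in> A then \<delta> $ j else 0)"

definition l1norm :: "real^'p \<Rightarrow> real" where
  "l1norm \<delta> = (\<Sum>j\<in>UNIV. \<bar>\<delta> $ j\<bar>)"

definition l0_out :: "real^'p \<Rightarrow> 'p set \<Rightarrow> nat" where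
  "l0_out \<delta> T = card {j. j \<notin> T \<and> \<delta> $ j \<noteq> 0}"

text \<open>Restricted eigenvalue kappa_{cbar} (the minimum is taken as an infimum).\<close>
definition kappa_re :: "(nat \<Rightarrow> real^'p) \<Rightarrow> nat \<Rightarrow> 'p set \<Rightarrow> nat \<Rightarrow> real \<Rightarrow> real" where
  "kappa_re x n T s cbar = Inf {sqrt (real s) * norm2n x n \<delta> / l1norm (restr \<delta> T) | \<delta>.
      l1norm (restr \<delta> (- T)) \<le> cbar * l1norm (restr \<delta> T) \<and> restr \<delta> T \<noteq> 0}"

definition sparse_ratios :: "(nat \<Rightarrow> real^'p) \<Rightarrow> nat \<Rightarrow> 'p set \<Rightarrow> nat \<Rightarrow> real set" where
  "sparse_ratios x n T m = {(norm2n x n \<delta>)^2 / (norm \<delta>)^2 | \<delta>. \<delta> \<noteq> 0 \<and> l0_out \<delta> T \<le> m}"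

definition kappa_sp :: "(nat \<Rightarrow> real^'p) \<Rightarrow> nat \<Rightarrow> 'p set \<Rightarrow> nat \<Rightarrow> real" where
  "kappa_sp x n T m = sqrt (Inf (sparse_ratios x n T m))"

definition phi_sp :: "(nat \<Rightarrow> real^'p) \<Rightarrow> nat \<Rightarrow> 'p set \<Rightarrow> nat \<Rightarrow> real" where
  "phi_sp x n T m = Sup (sparse_ratios x n T m)"

definition mu_sp :: "(nat \<Rightarrow> real^'p) \<Rightarrow> nat \<Rightarrow> 'p set \<Rightarrow> nat \<Rightarrow> real" where
  "mu_sp x n T m = sqrt (phi_sp x n T m) / kappa_sp x n T m"

end

theory Submission
  imports Defs
begin

text \<open>Write \<open>\<delta> = \<delta>\<^sub>T + \<delta>\<^sub>T\<^sub>c\<close> and shell the off-support part into consecutive blocks of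
  its \<open>m\<close> largest, next \<open>m\<close> largest, \<dots> entries. Every entry of a block is at most the mean
  absolute entry of the previous block, so the Euclidean norms of all blocks after the first add
  up to at most \<open>\<parallel>\<delta>\<^sub>T\<^sub>c\<parallel>\<^sub>1 / \<surd>m\<close>. Applying \<open>\<kappa>(m)\<close> to the \<open>m\<close>-sparse vector
  \<open>\<delta>\<^sub>T\<close> + (first block) and \<open>\<surd>\<phi>(m)\<close> to the later blocks gives
  \<open>\<parallel>\<delta>\<parallel>\<^sub>2\<^sub>,\<^sub>n \<ge> \<kappa>(m) \<parallel>\<delta>\<^sub>T\<parallel> - \<surd>\<phi>(m) \<parallel>\<delta>\<^sub>T\<^sub>c\<parallel>\<^sub>1 / \<surd>m\<close>. On the cone
  \<open>\<parallel>\<delta>\<^sub>T\<^sub>c\<parallel>\<^sub>1 \<le> c\<^sub>b\<^sub>a\<^sub>r \<parallel>\<delta>\<^sub>T\<parallel>\<^sub>1\<close>, Cauchy-Schwarz \<open>\<parallel>\<delta>\<^sub>T\<parallel>\<^sub>1 \<le> \<surd>s \<parallel>\<delta>\<^sub>T\<parallel>\<close> turns this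
  into the lower bound for \<open>\<surd>s \<parallel>\<delta>\<parallel>\<^sub>2\<^sub>,\<^sub>n / \<parallel>\<delta>\<^sub>T\<parallel>\<^sub>1\<close>.\<close>

lemma restr_nth [simp]: "restr d A $ j = (if j \<in> A then d $ j else 0)"
  by (simp add: restr_def)

lemma restr_add_restr_Compl: "restr d A + restr d (- A) = d"
  by (simp add: vec_eq_iff)

lemma l0_out_le_card:
  fixes d :: "real^'p"
  assumes "{j. j \<notin> T \<and> d $ j \<noteq> 0} \<subseteq> S"
  shows "l0_out d T \<le> card S"
  unfolding l0_out_def using assms by (simp add: card_mono)

lemma l1norm_nonneg: "l1norm d \<ge> 0"
  unfolding l1norm_def by (simp add: sum_nonneg)

lemma l1norm_pos: "d \<noteq> 0 \<Longrightarrow> l1norm d > 0"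
  unfolding l1norm_def by (auto simp: sum_nonneg_eq_0_iff vec_eq_iff order_less_le sum_nonneg)

lemma l1norm_eq_sum_supp:
  fixes d :: "real^'p"
  assumes "{j. d $ j \<noteq> 0} \<subseteq> S"
  shows "l1norm d = (\<Sum>j\<in>S. \<bar>d $ j\<bar>)"
  unfolding l1norm_def using assms by (intro sum.mono_neutral_right) auto

lemma l1norm_restr: "l1norm (restr d A) = (\<Sum>j\<in>A. \<bar>d $ j\<bar>)"
  by (subst l1norm_eq_sum_supp[of _ A]) auto

lemma l1norm_restr_add_restr_Compl: "l1norm (restr d A) + l1norm (restr d (- A)) = l1norm d"
proof -
  have "l1norm d = (\<Sum>j\<in>UNIV - A. \<bar>d $ j\<bar>) + (\<Sum>j\<in>A. \<bar>d $ j\<bar>)"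
    unfolding l1norm_def by (rule sum.subset_diff) auto
  then show ?thesis by (simp add: l1norm_restr Compl_eq_Diff_UNIV)
qed

lemma norm_vec_eq_L2_set_supp:
  fixes d :: "real^'p"
  assumes "{j. d $ j \<noteq> 0} \<subseteq> S"
  shows "norm d = L2_set (\<lambda>j. \<bar>d $ j\<bar>) S"
  unfolding norm_vec_def L2_set_def real_norm_def using assms
  by (intro arg_cong[where f = sqrt] sum.mono_neutral_right) auto

lemma norm_le_sqrt_card_mult:
  fixes d :: "real^'p"
  assumes "card {j. d $ j \<noteq> 0} \<le> k" and "\<And>j. \<bar>d $ j\<bar> \<le> A"
  shows "norm d \<le> sqrt (real k) * A"
proof -
  let ?S = "{j. d $ j \<noteq> 0}"
  have "A \<ge> 0" using assms(2) abs_ge_zero order_trans by blast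
  have "norm d = L2_set (\<lambda>j. \<bar>d $ j\<bar>) ?S" by (rule norm_vec_eq_L2_set_supp) simp
  also have "\<dots> \<le> L2_set (\<lambda>j. A) ?S" by (rule L2_set_mono) (simp_all add: assms(2))
  also have "\<dots> = sqrt (real (card ?S)) * A" using \<open>A \<ge> 0\<close> by (simp add: L2_set_constant)
  also have "\<dots> \<le> sqrt (real k) * A" using assms(1) \<open>A \<ge> 0\<close> by (simp add: mult_right_mono)
  finally show ?thesis .
qed

lemma l1norm_le_sqrt_card_mult_norm:
  fixes d :: "real^'p"
  assumes "{j. d $ j \<noteq> 0} \<subseteq> S"
  shows "l1norm d \<le> sqrt (real (card S)) * norm d"
proof -
  have "l1norm d = (\<Sum>j\<in>S. \<bar>\<bar>d $ j\<bar>\<bar> * \<bar>1\<bar>)" using l1norm_eq_sum_supp[OF assms] by simp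
  also have "\<dots> \<le> L2_set (\<lambda>j. \<bar>d $ j\<bar>) S * L2_set (\<lambda>j. 1) S" by (rule L2_set_mult_ineq)
  also have "\<dots> = sqrt (real (card S)) * norm d"
    by (simp add: L2_set_constant norm_vec_eq_L2_set_supp[OF assms])
  finally show ?thesis .
qed

lemma norm_le_norm_add_disjoint:
  fixes u v :: "real^'p"
  assumes "\<And>j. u $ j = 0 \<or> v $ j = 0"
  shows "norm u \<le> norm (u + v)"
  unfolding norm_vec_def real_norm_def
proof (rule L2_set_mono)
  fix j show "\<bar>u $ j\<bar> \<le> \<bar>(u + v) $ j\<bar>" using assms[of j] by auto
qed simp

lemma norm2n_eq_L2_set: "norm2n x n d = L2_set (\<lambda>i. x i \<bullet> d) {..<n} / sqrt (real n)"
  unfolding norm2n_def L2_set_def by (simp add: real_sqrt_divide)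

lemma norm2n_nonneg: "norm2n x n d \<ge> 0"
  unfolding norm2n_def by (simp add: sum_nonneg)

lemma norm2n_zero [simp]: "norm2n x n 0 = 0"
  unfolding norm2n_def by simp

lemma norm2n_uminus [simp]: "norm2n x n (- d) = norm2n x n d"
  unfolding norm2n_def by simp

lemma norm2n_triangle: "norm2n x n (a + b) \<le> norm2n x n a + norm2n x n b"
  unfolding norm2n_eq_L2_set inner_add_right add_divide_distrib [symmetric]
  by (intro divide_right_mono L2_set_triangle_ineq) simp

lemma sparse_ratios_bdd_above: "bdd_above (sparse_ratios x n T m)"
proof (rule bdd_aboveI)
  fix r assume "r \<in> sparse_ratios x n T m"
  then obtain d where r: "r = (norm2n x n d)\<^sup>2 / (norm d)\<^sup>2" and "d \<noteq> 0"
    unfolding sparse_ratios_def by blast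
  have "(x i \<bullet> d)\<^sup>2 \<le> (norm (x i))\<^sup>2 * (norm d)\<^sup>2" for i
  proof -
    have "\<bar>x i \<bullet> d\<bar>\<^sup>2 \<le> (norm (x i) * norm d)\<^sup>2"
      by (rule power_mono[OF Cauchy_Schwarz_ineq2]) simp
    then show ?thesis by (simp add: power_mult_distrib)
  qed
  then have "(\<Sum>i<n. (x i \<bullet> d)\<^sup>2) \<le> (\<Sum>i<n. (norm (x i))\<^sup>2) * (norm d)\<^sup>2"
    by (simp add: sum_distrib_right sum_mono)
  with \<open>d \<noteq> 0\<close> have "(\<Sum>i<n. (x i \<bullet> d)\<^sup>2) / (norm d)\<^sup>2 \<le> (\<Sum>i<n. (norm (x i))\<^sup>2)"
    by (simp add: pos_divide_le_eq)
  then have "((\<Sum>i<n. (x i \<bullet> d)\<^sup>2) / (norm d)\<^sup>2) / real n \<le> (\<Sum>i<n. (norm (x i))\<^sup>2) / real n"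
    by (rule divide_right_mono) simp
  moreover have "r = ((\<Sum>i<n. (x i \<bullet> d)\<^sup>2) / (norm d)\<^sup>2) / real n"
    unfolding r norm2n_def by (simp add: sum_nonneg mult.commute)
  ultimately show "r \<le> (\<Sum>i<n. (norm (x i))\<^sup>2) / real n"
    by (simp only:)
qed

lemma sparse_ratios_nonneg: "r \<in> sparse_ratios x n T m \<Longrightarrow> r \<ge> 0"
  unfolding sparse_ratios_def by auto

lemma sparse_ratios_bdd_below: "bdd_below (sparse_ratios x n T m)"
  by (rule bdd_belowI[of _ 0]) (rule sparse_ratios_nonneg)

lemma sparse_ratio_mem:
  "d \<noteq> 0 \<Longrightarrow> l0_out d T \<le> m \<Longrightarrow> (norm2n x n d / norm d)\<^sup>2 \<in> sparse_ratios x n T m"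
  unfolding sparse_ratios_def power_divide by blast

lemma sparse_ratios_nonempty:
  fixes x :: "nat \<Rightarrow> real^'p"
  assumes "m > 0" shows "sparse_ratios x n T m \<noteq> {}"
proof -
  obtain j :: 'p where True by simp
  let ?e = "axis j (1::real)"
  have "l0_out ?e T \<le> card {j}" by (rule l0_out_le_card) (auto simp: axis_def)
  then have "l0_out ?e T \<le> m" using assms by simp
  then have "(norm2n x n ?e / norm ?e)\<^sup>2 \<in> sparse_ratios x n T m"
    by (intro sparse_ratio_mem) simp_all
  then show ?thesis by blast
qed

lemma phi_sp_nonneg: "m > 0 \<Longrightarrow> phi_sp x n T m \<ge> 0"
proof -
  assume "m > 0"
  then obtain r where r: "r \<in> sparse_ratios x n T m" using sparse_ratios_nonempty by blast
  then have "r \<le> phi_sp x n T m"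
    unfolding phi_sp_def by (rule cSup_upper[OF _ sparse_ratios_bdd_above])
  with sparse_ratios_nonneg[OF r] show ?thesis by linarith
qed

lemma kappa_sp_nonneg: "m > 0 \<Longrightarrow> kappa_sp x n T m \<ge> 0"
  unfolding kappa_sp_def
  by (intro real_sqrt_ge_zero cInf_greatest sparse_ratios_nonempty) (simp_all add: sparse_ratios_nonneg)

lemma norm2n_le_sqrt_phi_sp_mult_norm:
  assumes "l0_out d T \<le> m"
  shows "norm2n x n d \<le> sqrt (phi_sp x n T m) * norm d"
proof (cases "d = 0")
  case False
  then have "(norm2n x n d / norm d)\<^sup>2 \<le> phi_sp x n T m"
    unfolding phi_sp_def using assms by (intro cSup_upper sparse_ratio_mem sparse_ratios_bdd_above)
  then have "norm2n x n d / norm d \<le> sqrt (phi_sp x n T m)"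
    using real_le_rsqrt by blast
  with False show ?thesis by (simp add: pos_divide_le_eq)
qed simp

lemma kappa_sp_mult_norm_le_norm2n:
  assumes "l0_out d T \<le> m"
  shows "kappa_sp x n T m * norm d \<le> norm2n x n d"
proof (cases "d = 0")
  case False
  have "Inf (sparse_ratios x n T m) \<le> (norm2n x n d / norm d)\<^sup>2"
    by (rule cInf_lower[OF sparse_ratio_mem[OF False assms] sparse_ratios_bdd_below])
  then have "kappa_sp x n T m \<le> sqrt ((norm2n x n d / norm d)\<^sup>2)"
    unfolding kappa_sp_def by (rule real_sqrt_le_mono)
  then have "kappa_sp x n T m \<le> norm2n x n d / norm d"
    by (simp add: norm2n_nonneg)
  with False show ?thesis by (simp add: pos_le_divide_eq)
qed simp

lemma sqrt_mult_divide_self: "sqrt (real m) * (a / real m) = a / sqrt (real m)"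
  by (cases "m = 0") (simp_all add: field_simps)

text \<open>Take a \<open>k\<close>-subset of maximal weight: exchanging one of its members for an outside
  element cannot increase the weight.\<close>

lemma exists_heavy_subset:
  fixes f :: "'a \<Rightarrow> real"
  assumes "finite S" and "k \<le> card S"
  shows "\<exists>B\<subseteq>S. card B = k \<and> (\<forall>i\<in>S - B. real k * f i \<le> sum f B)"
proof -
  let ?F = "{B. B \<subseteq> S \<and> card B = k}"
  have "finite ?F" by (rule finite_subset[of _ "Pow S"]) (use assms(1) in auto)
  moreover have "?F \<noteq> {}" using obtain_subset_with_card_n[OF assms(2)] by blast
  ultimately have "Max (sum f ` ?F) \<in> sum f ` ?F" by (intro Max_in) auto
  then obtain B where B_max: "Max (sum f ` ?F) = sum f B" and B: "B \<in> ?F" by (rule imageE)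
  have max: "sum f B' \<le> sum f B" if "B' \<in> ?F" for B'
    unfolding B_max[symmetric] using \<open>finite ?F\<close> that by (intro Max_ge) auto
  have "finite B" using B assms(1) finite_subset by blast
  have "real k * f i \<le> sum f B" if i: "i \<in> S - B" for i
  proof -
    have "f i \<le> f j" if j: "j \<in> B" for j
    proof -
      have "card B > 0" using j \<open>finite B\<close> card_gt_0_iff by blast
      with i j \<open>finite B\<close> have "card (insert i (B - {j})) = card B"
        by (simp add: card_Diff_singleton)
      with B i j have "insert i (B - {j}) \<in> ?F" by auto
      then have "sum f (insert i (B - {j})) \<le> sum f B" by (rule max)
      with i j \<open>finite B\<close> show ?thesis by (simp add: sum_diff1)
    qed
    then have "(\<Sum>j\<in>B. f i) \<le> sum f B" by (rule sum_mono)
    with B show ?thesis by simp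
  qed
  with B show ?thesis by blast
qed

lemma exists_heavy_block:
  fixes v :: "real^'p"
  assumes "m > 0"
  shows "\<exists>B\<subseteq>{j. v $ j \<noteq> 0}. card B = min m (card {j. v $ j \<noteq> 0}) \<and>
    (\<forall>j. \<bar>restr v (- B) $ j\<bar> \<le> l1norm (restr v B) / real m)"
proof -
  let ?S = "{j. v $ j \<noteq> 0}"
  obtain B where B: "B \<subseteq> ?S" "card B = min m (card ?S)"
    and heavy: "\<forall>i\<in>?S - B. real (min m (card ?S)) * \<bar>v $ i\<bar> \<le> (\<Sum>j\<in>B. \<bar>v $ j\<bar>)"
    using exists_heavy_subset[of ?S "min m (card ?S)" "\<lambda>j. \<bar>v $ j\<bar>"] by auto
  have "\<bar>restr v (- B) $ j\<bar> \<le> l1norm (restr v B) / real m" for j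
  proof (cases "j \<in> ?S - B")
    case True
    then have "B \<subset> ?S" using B(1) by blast
    then have "card B < card ?S" by (simp add: psubset_card_mono)
    with B(2) have "min m (card ?S) = m" by linarith
    with True heavy assms show ?thesis by (simp add: l1norm_restr pos_le_divide_eq mult.commute)
  qed (auto simp: l1norm_nonneg)
  with B show ?thesis by blast
qed

text \<open>Split off the heaviest block \<open>B\<close> of size \<open>m\<close>: the rest has entries at most
  \<open>\<parallel>w\<^sub>B\<parallel>\<^sub>1 / m\<close> and strictly smaller support, so induction applies to it.\<close>

lemma norm2n_le_shelling:
  fixes x :: "nat \<Rightarrow> real^'p" and w :: "real^'p"
  assumes "m > 0" and "\<And>j. \<bar>w $ j\<bar> \<le> A"
  shows "norm2n x n w \<le> sqrt (phi_sp x n T m) * (sqrt (real m) * A + l1norm w / sqrt (real m))"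
  using assms(2)
proof (induction "card {j. w $ j \<noteq> 0}" arbitrary: w A rule: less_induct)
  case less
  let ?P = "sqrt (phi_sp x n T m)" and ?S = "{j. w $ j \<noteq> 0}"
  have "?P \<ge> 0" using phi_sp_nonneg[OF assms(1)] by simp
  have "A \<ge> 0" using less.prems abs_ge_zero order_trans by blast
  obtain B where B: "B \<subseteq> ?S" "card B = min m (card ?S)"
    and tail_le: "\<And>j. \<bar>restr w (- B) $ j\<bar> \<le> l1norm (restr w B) / real m"
    using exists_heavy_block[OF assms(1), of w] by blast
  have supp_head: "{j. restr w B $ j \<noteq> 0} \<subseteq> B" by auto
  have "card {j. restr w B $ j \<noteq> 0} \<le> m"
    using card_mono[OF _ supp_head] B(2) by simp
  then have "norm2n x n (restr w B) \<le> ?P * norm (restr w B)"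
    using supp_head by (intro norm2n_le_sqrt_phi_sp_mult_norm order_trans[OF l0_out_le_card]) auto
  also have "\<dots> \<le> ?P * (sqrt (real m) * A)"
    using \<open>?P \<ge> 0\<close> \<open>card {j. restr w B $ j \<noteq> 0} \<le> m\<close> less.prems \<open>A \<ge> 0\<close>
    by (intro mult_left_mono norm_le_sqrt_card_mult) auto
  finally have head: "norm2n x n (restr w B) \<le> ?P * (sqrt (real m) * A)" .
  have tail: "norm2n x n (restr w (- B))
      \<le> ?P * (l1norm (restr w B) / sqrt (real m) + l1norm (restr w (- B)) / sqrt (real m))"
  proof (cases "?S \<subseteq> B")
    case True
    then have "restr w (- B) = 0" by (auto simp: vec_eq_iff)
    then show ?thesis using \<open>?P \<ge> 0\<close> by (simp add: l1norm_nonneg)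
  next
    case False
    then have "card ?S > 0" by (auto simp: card_gt_0_iff)
    with B(2) assms(1) have "B \<noteq> {}" by auto
    then have "{j. restr w (- B) $ j \<noteq> 0} \<subset> ?S" using B(1) by auto
    then have "card {j. restr w (- B) $ j \<noteq> 0} < card ?S" by (simp add: psubset_card_mono)
    from less.hyps[OF this tail_le] show ?thesis unfolding sqrt_mult_divide_self .
  qed
  have "norm2n x n w \<le> norm2n x n (restr w B) + norm2n x n (restr w (- B))"
    using norm2n_triangle[of x n "restr w B" "restr w (- B)"] by (simp add: restr_add_restr_Compl)
  also have "\<dots> \<le> ?P * (sqrt (real m) * A + l1norm w / sqrt (real m))"
    using head tail unfolding l1norm_restr_add_restr_Compl[of w B, symmetric]
    by (simp add: add_divide_distrib algebra_simps)
  finally show ?case .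
qed

lemma norm2n_lower_bound:
  fixes x :: "nat \<Rightarrow> real^'p" and \<delta> :: "real^'p"
  assumes "m > 0"
  shows "kappa_sp x n T m * norm (restr \<delta> T)
    - sqrt (phi_sp x n T m) * l1norm (restr \<delta> (- T)) / sqrt (real m) \<le> norm2n x n \<delta>"
proof -
  let ?K = "kappa_sp x n T m" and ?P = "sqrt (phi_sp x n T m)"
  define u where "u = restr \<delta> T"
  define v where "v = restr \<delta> (- T)"
  obtain B where B: "B \<subseteq> {j. v $ j \<noteq> 0}" "card B = min m (card {j. v $ j \<noteq> 0})"
    and tail_le: "\<And>j. \<bar>restr v (- B) $ j\<bar> \<le> l1norm (restr v B) / real m"
    using exists_heavy_block[OF assms, of v] by blast
  define head where "head = u + restr v B"
  have "{j. j \<notin> T \<and> head $ j \<noteq> 0} \<subseteq> B" by (auto simp: head_def u_def)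
  then have "l0_out head T \<le> card B" by (rule l0_out_le_card)
  with B(2) have "l0_out head T \<le> m" by linarith
  have "?K * norm u \<le> ?K * norm head"
    unfolding head_def using kappa_sp_nonneg[OF assms] B(1)
    by (intro mult_left_mono norm_le_norm_add_disjoint) (auto simp: u_def v_def)
  also have "\<dots> \<le> norm2n x n head"
    using \<open>l0_out head T \<le> m\<close> by (rule kappa_sp_mult_norm_le_norm2n)
  also have "\<dots> \<le> norm2n x n \<delta> + norm2n x n (restr v (- B))"
  proof -
    have "head = \<delta> + - restr v (- B)"
      by (simp add: vec_eq_iff head_def u_def v_def)
    then show ?thesis using norm2n_triangle[of x n \<delta> "- restr v (- B)"] by simp
  qed
  also have "\<dots> \<le> norm2n x n \<delta> + ?P * l1norm v / sqrt (real m)"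
  proof -
    have "norm2n x n (restr v (- B))
        \<le> ?P * (l1norm (restr v B) / sqrt (real m) + l1norm (restr v (- B)) / sqrt (real m))"
      using norm2n_le_shelling[OF assms tail_le, of x n T, unfolded sqrt_mult_divide_self] .
    also have "\<dots> = ?P * l1norm v / sqrt (real m)"
      by (simp add: l1norm_restr_add_restr_Compl flip: add_divide_distrib)
    finally show ?thesis by simp
  qed
  finally show ?thesis unfolding u_def v_def by simp
qed

lemma cone_ratio_lower_bound:
  fixes x :: "nat \<Rightarrow> real^'p" and \<delta> :: "real^'p"
  assumes "m > 0" and "card T = s"
    and cone: "l1norm (restr \<delta> (- T)) \<le> cbar * l1norm (restr \<delta> T)"
    and "restr \<delta> T \<noteq> 0"
  shows "kappa_sp x n T m - sqrt (phi_sp x n T m) * cbar * sqrt (real s / real m)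
    \<le> sqrt (real s) * norm2n x n \<delta> / l1norm (restr \<delta> T)"
proof -
  let ?K = "kappa_sp x n T m" and ?P = "sqrt (phi_sp x n T m)"
  define L where "L = l1norm (restr \<delta> T)"
  have "L > 0" unfolding L_def using assms(4) by (rule l1norm_pos)
  have L_le: "L \<le> sqrt (real s) * norm (restr \<delta> T)"
    unfolding L_def assms(2)[symmetric] by (rule l1norm_le_sqrt_card_mult_norm) auto
  have "?P * l1norm (restr \<delta> (- T)) \<le> ?P * (cbar * L)"
    unfolding L_def using cone phi_sp_nonneg[OF assms(1)] by (intro mult_left_mono) simp_all
  then have tail_le: "sqrt (real s) * (?P * l1norm (restr \<delta> (- T)) / sqrt (real m))
      \<le> sqrt (real s) * (?P * (cbar * L) / sqrt (real m))"
    by (simp add: divide_right_mono mult_left_mono)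
  have "(?K - ?P * cbar * sqrt (real s / real m)) * L
      = ?K * L - sqrt (real s) * (?P * (cbar * L) / sqrt (real m))"
    by (simp add: real_sqrt_divide algebra_simps)
  also have "\<dots> \<le> sqrt (real s) * (?K * norm (restr \<delta> T))
      - sqrt (real s) * (?P * l1norm (restr \<delta> (- T)) / sqrt (real m))"
    using mult_left_mono[OF L_le kappa_sp_nonneg[OF assms(1), of x n T]] tail_le
    by (simp add: algebra_simps)
  also have "\<dots> = sqrt (real s) * (?K * norm (restr \<delta> T)
      - ?P * l1norm (restr \<delta> (- T)) / sqrt (real m))"
    by (simp add: right_diff_distrib)
  also have "\<dots> \<le> sqrt (real s) * norm2n x n \<delta>"
    by (intro mult_left_mono norm2n_lower_bound assms(1)) simp
  finally have "(?K - ?P * cbar * sqrt (real s / real m)) * L \<le> sqrt (real s) * norm2n x n \<delta>" .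
  with \<open>L > 0\<close> show ?thesis unfolding L_def by (simp add: pos_le_divide_eq)
qed

lemma le_kappa_re:
  fixes x :: "nat \<Rightarrow> real^'p"
  assumes "T \<noteq> {}" and "cbar \<ge> 0"
    and "\<And>\<delta>. l1norm (restr \<delta> (- T)) \<le> cbar * l1norm (restr \<delta> T) \<Longrightarrow> restr \<delta> T \<noteq> 0 \<Longrightarrow>
      b \<le> sqrt (real s) * norm2n x n \<delta> / l1norm (restr \<delta> T)"
  shows "b \<le> kappa_re x n T s cbar"
proof -
  let ?R = "{sqrt (real s) * norm2n x n \<delta> / l1norm (restr \<delta> T) | \<delta>.
      l1norm (restr \<delta> (- T)) \<le> cbar * l1norm (restr \<delta> T) \<and> restr \<delta> T \<noteq> 0}"
  obtain j where "j \<in> T" using assms(1) by blast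
  let ?e = "axis j (1::real)"
  have "restr ?e T = ?e" and "restr ?e (- T) = 0"
    using \<open>j \<in> T\<close> by (auto simp: vec_eq_iff axis_def)
  then have "sqrt (real s) * norm2n x n ?e / l1norm (restr ?e T) \<in> ?R"
    using assms(2)
    by (intro CollectI exI[of _ ?e] conjI refl) (simp_all add: l1norm_nonneg l1norm_def)
  moreover have "b \<le> r" if "r \<in> ?R" for r
    using that assms(3) by auto
  ultimately show ?thesis
    unfolding kappa_re_def by (intro cInf_greatest) blast+
qed

theorem lemma10:
  fixes x :: "nat \<Rightarrow> real^'p" and n :: nat and T :: "'p set" and s :: nat
    and c :: real and m :: nat
  assumes "n \<ge> 1"
    and "card T = s" and "s \<ge> 1"
    and "c > 1"
    and "m > 0"
  shows "kappa_re x n T s ((c + 1) / (c - 1)) \<ge>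
    kappa_sp x n T m * (1 - mu_sp x n T m * ((c + 1) / (c - 1)) * sqrt (real s / real m))"
proof (rule le_kappa_re)
  show "T \<noteq> {}" using assms(2,3) by auto
  show "(c + 1) / (c - 1) \<ge> 0" using assms(4) by simp
  fix \<delta> :: "real^'p"
  assume cone: "l1norm (restr \<delta> (- T)) \<le> (c + 1) / (c - 1) * l1norm (restr \<delta> T)"
    and "restr \<delta> T \<noteq> 0"
  show "kappa_sp x n T m * (1 - mu_sp x n T m * ((c + 1) / (c - 1)) * sqrt (real s / real m))
      \<le> sqrt (real s) * norm2n x n \<delta> / l1norm (restr \<delta> T)"
  proof (cases "kappa_sp x n T m = 0")
    case True
    then show ?thesis by (simp add: norm2n_nonneg l1norm_nonneg)
  next
    case False
    then have "kappa_sp x n T m * (1 - mu_sp x n T m * b * t)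
        = kappa_sp x n T m - sqrt (phi_sp x n T m) * b * t" for b t
      unfolding mu_sp_def by (simp add: field_simps)
    then show ?thesis
      using cone_ratio_lower_bound[OF assms(5,2) cone \<open>restr \<delta> T \<noteq> 0\<close>, where x = x and n = n]
      by (simp only:)
  qed
qed

end
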